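(* Let $\langle W,\mathcal{N},V\rangle$ be an nIML1-model satisfying the $T$-condition (for all $w,v\in W$, $v\in\bigcup\mathcal{N}_w$ implies $\bigcap\mathcal{N}_v\subseteq\bigcup\mathcal{N}_w$). Then for every $w\in W$ the family $\mathcal{U}_w$ of $w$-open sets is a topology on $\bigcup\mathcal{N}_w$: it contains $\emptyset$ and $\bigcup\mathcal{N}_w$, and it is closed under arbitrary unions and under arbitrary intersections.
   Context: An nIML1-model is a triple $\langle W,\mathcal{N},V\rangle$ with $W\neq\emptyset$, $\mathcal{N}:W\to P(P(W))$ satisfying for all $w$: (a) $w\in\bigcap\mathcal{N}_w$; (b) $\bigcap\mathcal{N}_w\in\mathcal{N}_w$; (c) $u\in\bigcap\mathcal{N}_w\Rightarrow\bigcap\mathcal{N}_u\subseteq\bigcap\mathcal{N}_w$; (d) $\bigcap\mathcal{N}_w\subseteq X\subseteq\bigcup\mathcal{N}_w\Rightarrow X\in\mathcal{N}_w$; (e) $u\in\bigcap\mathcal{N}_w\Rightarrow\bigcup\mathcal{N}_u\subseteq\bigcup\mathcal{N}_w$, where $\bigcap\mathcal{N}_w$ and $\bigcup\mathcal{N}_w$ are the intersection and union of the family $\mathcal{N}_w$, and $V$ is a map from propositional variables to $P(W)$ with $w\in V(q)\Rightarrow\bigcap\mathcal{N}_w\subseteq V(q)$. A set $X\subseteq W$ is $w$-open iff $X\subseteq\bigcup\mathcal{N}_w$ and $\bigcap\mathcal{N}_v\subseteq X$ for every $v\in X$; $\mathcal{U}_w$ is the set of all $w$-open sets. (The intersection of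 the empty subfamily is understood as the whole space $\bigcup\mathcal{N}_w$.) *)

theory Defs
  imports Main
begin

(* An nIML1-model <W, N, V>; N is only relevant on W, and N w is a family of subsets of W. *)
definition nIML1_model :: "'a set \<Rightarrow> ('a \<Rightarrow> 'a set set) \<Rightarrow> ('p \<Rightarrow> 'a set) \<Rightarrow> bool" where
  "nIML1_model W N V \<longleftrightarrow>
     W \<noteq> {} \<and>
     (\<forall>w\<in>W. N w \<subseteq> Pow W) \<and>
     (\<forall>q. V q \<subseteq> W) \<and>
     (\<forall>w\<in>W. w \<in> \<Inter>(N w)) \<and>
     (\<forall>w\<in>W. \<Inter>(N w) \<in> N w) \<and>
     (\<forall>w\<in>W. \<forall>u\<in>\<Inter>(N w). \<Inter>(N u) \<subseteq> \<Inter>(N w)) \<and>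
     (\<forall>w\<in>W. \<forall>X. \<Inter>(N w) \<subseteq> X \<and> X \<subseteq> \<Union>(N w) \<longrightarrow> X \<in> N w) \<and>
     (\<forall>w\<in>W. \<forall>u\<in>\<Inter>(N w). \<Union>(N u) \<subseteq> \<Union>(N w)) \<and>
     (\<forall>q. \<forall>w\<in>V q. \<Inter>(N w) \<subseteq> V q)"

definition T_condition :: "'a set \<Rightarrow> ('a \<Rightarrow> 'a set set) \<Rightarrow> bool" where
  "T_condition W N \<longleftrightarrow> (\<forall>w\<in>W. \<forall>v\<in>W. v \<in> \<Union>(N w) \<longrightarrow> \<Inter>(N v) \<subseteq> \<Union>(N w))"

definition w_open :: "('a \<Rightarrow> 'a set set) \<Rightarrow> 'a \<Rightarrow> 'a set \<Rightarrow> bool" where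
  "w_open N w X \<longleftrightarrow> X \<subseteq> \<Union>(N w) \<and> (\<forall>v\<in>X. \<Inter>(N v) \<subseteq> X)"

definition U_fam :: "('a \<Rightarrow> 'a set set) \<Rightarrow> 'a \<Rightarrow> 'a set set" where
  "U_fam N w = {X. w_open N w X}"

end

theory Submission
  imports Defs
begin

text \<open>A union of \<open>w\<close>-open sets is \<open>w\<close>-open with no assumption on \<open>N\<close>. For
  intersections one first cuts down to the space \<open>\<Union>(N w)\<close>; by the \<open>T\<close>-condition
  every point of the space keeps its least neighbourhood \<open>\<Inter>(N v)\<close> inside the space,
  and by openness inside every member of the family containing it. The whole space
  is the intersection of the empty family.\<close>

lemma w_open_empty: "w_open N w {}"
  unfolding w_open_def by simp

lemma w_open_Union:
  assumes "\<And>X. X \<in> F \<Longrightarrow> w_open N w X"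
  shows "w_open N w (\<Union>F)"
  using assms unfolding w_open_def by blast

lemma w_open_space_Int_Inter:
  assumes space: "\<And>v. v \<in> \<Union>(N w) \<Longrightarrow> \<Inter>(N v) \<subseteq> \<Union>(N w)"
    and opens: "\<And>X. X \<in> F \<Longrightarrow> w_open N w X"
  shows "w_open N w (\<Union>(N w) \<inter> \<Inter>F)"
  unfolding w_open_def
proof (intro conjI ballI)
  fix v assume v: "v \<in> \<Union>(N w) \<inter> \<Inter>F"
  have "\<Inter>(N v) \<subseteq> X" if "X \<in> F" for X
    using opens[OF that] v that unfolding w_open_def by blast
  with space v show "\<Inter>(N v) \<subseteq> \<Union>(N w) \<inter> \<Inter>F" by blast
qed blast

lemma nIML1_model_space_subset:
  assumes "nIML1_model W N V" and "w \<in> W"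
  shows "\<Union>(N w) \<subseteq> W"
proof -
  have "\<forall>w\<in>W. N w \<subseteq> Pow W"
    using assms(1) unfolding nIML1_model_def by (elim conjE)
  with assms(2) show ?thesis by blast
qed

lemma T_condition_space:
  assumes "nIML1_model W N V" and "T_condition W N" and "w \<in> W"
    and "v \<in> \<Union>(N w)"
  shows "\<Inter>(N v) \<subseteq> \<Union>(N w)"
  using assms(2-4) nIML1_model_space_subset[OF assms(1,3)] unfolding T_condition_def by blast

theorem theorem10p1:
  fixes W :: "'a set" and N :: "'a \<Rightarrow> 'a set set" and V :: "'p \<Rightarrow> 'a set"
  assumes "nIML1_model W N V" and "T_condition W N" and "w \<in> W"
  shows "{} \<in> U_fam N w \<and> \<Union>(N w) \<in> U_fam N w \<and>
         (\<forall>F. F \<subseteq> U_fam N w \<longrightarrow> \<Union>F \<in> U_fam N w) \<and>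
         (\<forall>F. F \<subseteq> U_fam N w \<longrightarrow> \<Union>(N w) \<inter> \<Inter>F \<in> U_fam N w)"
proof -
  note space = T_condition_space[OF assms]
  have union: "\<forall>F. F \<subseteq> U_fam N w \<longrightarrow> \<Union>F \<in> U_fam N w"
    by (auto simp: U_fam_def intro: w_open_Union)
  have inter: "\<forall>F. F \<subseteq> U_fam N w \<longrightarrow> \<Union>(N w) \<inter> \<Inter>F \<in> U_fam N w"
    by (auto simp: U_fam_def intro: w_open_space_Int_Inter[of N w, OF space])
  have "\<Union>(N w) \<in> U_fam N w"
    using inter[rule_format, of "{}"] by simp
  moreover have "{} \<in> U_fam N w"
    by (simp add: U_fam_def w_open_empty)
  ultimately show ?thesis
    using union inter by blast
qed

end
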